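(* Let $T\ge 1$ and $n_w\ge 0$ be integers, let $C>0$, and let $q_1,\dots,q_T\in\mathbb{R}$. For $\mathbf{u}=(u_1,\dots,u_T)\in\mathbb{R}^T$ and $i=1,\dots,T$ write $\mathbf{u}_i=(u_{i-n_w},\dots,u_i)$, where entries with index $\le 0$ are fixed constants (not decision variables). Let $J_i:\mathbb{R}\to\mathbb{R}$ ($i=1,\dots,T$) be continuously differentiable and increasing, and let $f_i:\mathbb{R}^{n_w+1}\to\mathbb{R}$ ($i=1,\dots,T$) be continuously differentiable and non-decreasing in each of their arguments. Define the penalty function $$\hat J(\mathbf{u})=\sum_{i=1}^T\Big(J_i(u_i)+C\big(f_i(\mathbf{u}_i)-q_i\big)^2\Big),$$ and, for guardrail variables $\epsilon_1,\dots,\epsilon_T\ge 0$, the modified penalty function $$\hat J'(\mathbf{u})=\sum_{i=1}^T\Big(J_i(u_i)+C\big(f_i(\mathbf{u}_i)-q_i-\epsilon_i\big)^2\Big).$$ Let $\mathbf{u}^*$ be any (unconstrained, local) minimum of $\hat J$ on $\mathbb{R}^T$. Then the first step of gradient descent on $\hat J'$ started at $\mathbf{u}^*$ does not decrease any coordinate: for every step size $\alpha>0$ and every $j=1,\dots,T$, the $j$-th coordinate of $\mathbf{u}^*-\alpha\nabla\hat J'(\mathbf{u}^* )$ is at least $u^*_j$ (equivalently, $\nabla \hat J'(\mathbf{u}^* )\le \mathbf{0}$ componentwise).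
   Context: "Increasing" for a differentiable function means its derivative is strictly positive; "non-decreasing" means all its partial derivatives are non-negative. $\hat J'$ is obtained from $\hat J$ by replacing each right-hand side $q_i$ by $q_i+\epsilon_i$. *)

theory Defs
  imports "HOL-Analysis.Analysis"
begin

definition ext_vec :: "(int \<Rightarrow> real) \<Rightarrow> (int \<Rightarrow> real) \<Rightarrow> int \<Rightarrow> real" where
  "ext_vec u0 u k = (if k \<le> 0 then u0 k else u k)"

text \<open>The window vector u_i = (u_{i-nw}, ..., u_i); position p in {0..nw} of the
  coordinate type 'w corresponds to index i - nw + p.\<close>
definition window :: "nat \<Rightarrow> ('w \<Rightarrow> nat) \<Rightarrow> (int \<Rightarrow> real) \<Rightarrow> (int \<Rightarrow> real) \<Rightarrow> int \<Rightarrow> real ^ 'w" where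
  "window nw pos u0 u i = (\<chi> k. ext_vec u0 u (i - int nw + int (pos k)))"

text \<open>Penalty function with right-hand sides q (the modified one uses q + eps).\<close>
definition penalty ::
  "int \<Rightarrow> nat \<Rightarrow> ('w \<Rightarrow> nat) \<Rightarrow> (int \<Rightarrow> real) \<Rightarrow> real \<Rightarrow> (int \<Rightarrow> real \<Rightarrow> real)
     \<Rightarrow> (int \<Rightarrow> real ^ 'w \<Rightarrow> real) \<Rightarrow> (int \<Rightarrow> real) \<Rightarrow> (int \<Rightarrow> real) \<Rightarrow> real" where
  "penalty T nw pos u0 C J f q u =
     (\<Sum>i = 1..T. J i (u i) + C * (f i (window nw pos u0 u i) - q i)\<^sup>2)"

end

theory Submission
  imports Defs
begin

text \<open>Only the fit terms depend on the right-hand sides, and replacing \<open>q\<^sub>i\<close> by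
  \<open>q\<^sub>i + \<epsilon>\<^sub>i\<close> shifts the \<open>j\<close>-th partial derivative of the penalty by
  \<open>-2 C \<Sum>\<^sub>i \<epsilon>\<^sub>i \<partial>f\<^sub>i(u\<^sub>i)/\<partial>u\<^sub>j\<close>. Monotonicity of the \<open>f\<^sub>i\<close> makes this shift
  non-positive, while at a local minimum of the unmodified penalty the partial derivative
  vanishes. Hence every partial derivative of the modified penalty is \<open>\<le> 0\<close> there.\<close>

definition window_partial :: "nat \<Rightarrow> ('w \<Rightarrow> nat) \<Rightarrow> int \<Rightarrow> int \<Rightarrow> real ^ 'w" where
  "window_partial nw pos j i = (\<chi> k. if i - int nw + int (pos k) = j then 1 else 0)"

lemma window_fun_upd:
  assumes "j \<ge> 1"
  shows "window nw pos u0 (u(j := x)) i =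
           window nw pos u0 (u(j := 0)) i + x *\<^sub>R window_partial nw pos j i"
  using assms by (auto simp: vec_eq_iff window_def ext_vec_def window_partial_def)

lemma window_partial_cases:
  assumes "inj pos"
  obtains "window_partial nw pos j i = 0" | k where "window_partial nw pos j i = axis k 1"
proof (cases "\<exists>k. i - int nw + int (pos k) = j")
  case True
  then obtain k where k: "i - int nw + int (pos k) = j" by blast
  with assms have "i - int nw + int (pos k') = j \<longleftrightarrow> k' = k" for k'
    by (auto dest: injD)
  then have "window_partial nw pos j i = axis k 1"
    by (auto simp: window_partial_def vec_eq_iff axis_def)
  then show ?thesis by (rule that(2))
next
  case False
  then show ?thesis by (intro that(1)) (auto simp: window_partial_def vec_eq_iff)
qed

lemma monotone_linear_window_partial_nonneg:
  fixes L :: "real ^ 'w \<Rightarrow> real"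
  assumes "inj pos" and "linear L" and "\<And>k. L (axis k 1) \<ge> 0"
  shows "L (window_partial nw pos j i) \<ge> 0"
  using assms by (cases rule: window_partial_cases[OF \<open>inj pos\<close>, of nw j i]) (auto simp: linear_0)

lemma has_real_derivative_along_line:
  assumes "(g has_derivative g') (at (a + y *\<^sub>R v))"
  shows "((\<lambda>x. g (a + x *\<^sub>R v)) has_real_derivative g' v) (at y)"
proof -
  have "((\<lambda>x. a + x *\<^sub>R v) has_derivative (\<lambda>h. h *\<^sub>R v)) (at y)"
    by (auto intro!: derivative_eq_intros)
  from diff_chain_at[OF this assms]
  have "((\<lambda>x. g (a + x *\<^sub>R v)) has_derivative (\<lambda>h. g' (h *\<^sub>R v))) (at y)"
    by (simp add: o_def)
  moreover have "(\<lambda>h. g' (h *\<^sub>R v)) = (*) (g' v)"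
    using linear_scale[OF has_derivative_linear[OF assms]] by (auto simp: mult.commute)
  ultimately show ?thesis
    by (simp add: has_field_derivative_def)
qed

definition penalty_partial ::
  "int \<Rightarrow> nat \<Rightarrow> ('w \<Rightarrow> nat) \<Rightarrow> (int \<Rightarrow> real) \<Rightarrow> real \<Rightarrow> (int \<Rightarrow> real \<Rightarrow> real)
     \<Rightarrow> (int \<Rightarrow> real ^ 'w \<Rightarrow> real) \<Rightarrow> (int \<Rightarrow> real ^ 'w \<Rightarrow> real ^ 'w \<Rightarrow> real)
     \<Rightarrow> (int \<Rightarrow> real) \<Rightarrow> (int \<Rightarrow> real) \<Rightarrow> int \<Rightarrow> real" where
  "penalty_partial T nw pos u0 C J f f' q u j =
     deriv (J j) (u j) +
     (\<Sum>i = 1..T. 2 * C * (f i (window nw pos u0 u i) - q i) *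
                    f' i (window nw pos u0 u i) (window_partial nw pos j i))"

lemma has_real_derivative_penalty_fun_upd:
  assumes j: "j \<in> {1..T}"
    and J_diff: "J j differentiable at (u j)"
    and f_diff: "\<And>i x. i \<in> {1..T} \<Longrightarrow> (f i has_derivative f' i x) (at x)"
  shows "((\<lambda>x. penalty T nw pos u0 C J f q (u(j := x))) has_real_derivative
           penalty_partial T nw pos u0 C J f f' q u j) (at (u j))"
proof -
  let ?w = "\<lambda>x i. window nw pos u0 (u(j := x)) i"
  have J_deriv: "((\<lambda>x. J i ((u(j := x)) i)) has_real_derivative
                   (if i = j then deriv (J j) (u j) else 0)) (at (u j))" for i
    using J_diff by (auto simp: DERIV_deriv_iff_real_differentiable)
  have f_deriv: "((\<lambda>x. f i (?w x i)) has_real_derivative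
                   f' i (?w (u j) i) (window_partial nw pos j i)) (at (u j))"
    if "i \<in> {1..T}" for i
  proof -
    have line: "window nw pos u0 (u(j := 0)) i + x *\<^sub>R window_partial nw pos j i = ?w x i" for x
      using j by (intro window_fun_upd[symmetric]) simp
    show ?thesis
      using has_real_derivative_along_line[OF f_diff[OF that],
          where a = "window nw pos u0 (u(j := 0)) i" and y = "u j" and v = "window_partial nw pos j i"]
      by (simp only: line)
  qed
  have term_deriv: "((\<lambda>x. J i ((u(j := x)) i) + C * (f i (?w x i) - q i)\<^sup>2) has_real_derivative
      (if i = j then deriv (J j) (u j) else 0) +
        2 * C * (f i (?w (u j) i) - q i) * f' i (?w (u j) i) (window_partial nw pos j i))
      (at (u j))" if "i \<in> {1..T}" for i
    by (rule DERIV_cong[OF DERIV_add[OF J_deriv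
          DERIV_cmult[OF DERIV_power[OF DERIV_diff[OF f_deriv[OF that] DERIV_const]]]]])
      simp
  show ?thesis
    unfolding penalty_def
    by (rule DERIV_cong[OF DERIV_sum[OF term_deriv]])
      (use j in \<open>simp_all add: penalty_partial_def sum.distrib\<close>)
qed

lemma penalty_partial_shift:
  "penalty_partial T nw pos u0 C J f f' (\<lambda>i. q i + eps i) u j =
     penalty_partial T nw pos u0 C J f f' q u j -
     2 * C * (\<Sum>i = 1..T. eps i * f' i (window nw pos u0 u i) (window_partial nw pos j i))"
  unfolding penalty_partial_def sum_distrib_left add_diff_eq[symmetric] sum_subtractf[symmetric]
  by (simp add: algebra_simps)

lemma coordinate_derivative_zero_at_local_min:
  fixes F :: "('a \<Rightarrow> real) \<Rightarrow> real"
  assumes deriv: "((\<lambda>x. F (u(j := x))) has_real_derivative D) (at (u j))"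
    and "j \<in> K" and "e > 0"
    and min: "\<forall>v. (\<forall>k\<in>K. \<bar>v k - u k\<bar> < e) \<longrightarrow> F u \<le> F v"
  shows "D = 0"
proof (rule DERIV_local_min[OF deriv \<open>e > 0\<close>], intro allI impI)
  fix y assume "\<bar>u j - y\<bar> < e"
  with \<open>e > 0\<close> have "\<forall>k\<in>K. \<bar>(u(j := y)) k - u k\<bar> < e"
    by (auto simp: abs_minus_commute)
  with min show "F (u(j := u j)) \<le> F (u(j := y))" by simp
qed

theorem proposition3:
  fixes T :: int and nw :: nat and C :: real
    and pos :: "'w::finite \<Rightarrow> nat"
    and u0 q eps ustar :: "int \<Rightarrow> real"
    and J :: "int \<Rightarrow> real \<Rightarrow> real"
    and f :: "int \<Rightarrow> real ^ 'w \<Rightarrow> real"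
    and f' :: "int \<Rightarrow> real ^ 'w \<Rightarrow> real ^ 'w \<Rightarrow> real"
  assumes T: "T \<ge> 1"
    and C: "C > 0"
    and pos: "bij_betw pos UNIV {0..nw}"
    and J_C1: "\<And>i. i \<in> {1..T} \<Longrightarrow> J i C1_differentiable_on UNIV"
    and J_incr: "\<And>i x. i \<in> {1..T} \<Longrightarrow> deriv (J i) x > 0"
    and f_diff: "\<And>i x. i \<in> {1..T} \<Longrightarrow> (f i has_derivative f' i x) (at x)"
    and f_cont: "\<And>i k. i \<in> {1..T} \<Longrightarrow> continuous_on UNIV (\<lambda>x. f' i x (axis k 1))"
    and f_mono: "\<And>i k x. i \<in> {1..T} \<Longrightarrow> f' i x (axis k 1) \<ge> 0"
    and eps: "\<And>i. i \<in> {1..T} \<Longrightarrow> eps i \<ge> 0"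
    and locmin: "\<exists>e>0. \<forall>v. (\<forall>k\<in>{1..T}. \<bar>v k - ustar k\<bar> < e) \<longrightarrow>
                   penalty T nw pos u0 C J f q ustar \<le> penalty T nw pos u0 C J f q v"
  shows "\<forall>j\<in>{1..T}. \<exists>D.
           ((\<lambda>x. penalty T nw pos u0 C J f (\<lambda>i. q i + eps i) (ustar(j := x)))
              has_real_derivative D) (at (ustar j))
           \<and> (\<forall>\<alpha>>0. ustar j - \<alpha> * D \<ge> ustar j)"
proof
  fix j assume j: "j \<in> {1..T}"
  have J_diff: "J j differentiable at (ustar j)"
    using J_C1[OF j] by (auto simp: C1_differentiable_on_eq)
  have has_deriv: "((\<lambda>x. penalty T nw pos u0 C J f r (ustar(j := x))) has_real_derivative
      penalty_partial T nw pos u0 C J f f' r ustar j) (at (ustar j))" for r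
    using j J_diff f_diff by (rule has_real_derivative_penalty_fun_upd)
  obtain e where "e > 0" and min: "\<forall>v. (\<forall>k\<in>{1..T}. \<bar>v k - ustar k\<bar> < e) \<longrightarrow>
      penalty T nw pos u0 C J f q ustar \<le> penalty T nw pos u0 C J f q v"
    using locmin by blast
  have stationary: "penalty_partial T nw pos u0 C J f f' q ustar j = 0"
    using coordinate_derivative_zero_at_local_min[OF has_deriv j \<open>e > 0\<close> min] .
  have "f' i (window nw pos u0 ustar i) (window_partial nw pos j i) \<ge> 0" if "i \<in> {1..T}" for i
    using monotone_linear_window_partial_nonneg[OF bij_betw_imp_inj_on[OF pos]]
      has_derivative_linear[OF f_diff] f_mono that by blast
  with eps have "(\<Sum>i = 1..T. eps i * f' i (window nw pos u0 ustar i) (window_partial nw pos j i)) \<ge> 0"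
    by (intro sum_nonneg mult_nonneg_nonneg) auto
  with C have "penalty_partial T nw pos u0 C J f f' (\<lambda>i. q i + eps i) ustar j \<le> 0"
    unfolding penalty_partial_shift stationary by simp
  with has_deriv show "\<exists>D. ((\<lambda>x. penalty T nw pos u0 C J f (\<lambda>i. q i + eps i) (ustar(j := x)))
      has_real_derivative D) (at (ustar j)) \<and> (\<forall>\<alpha>>0. ustar j - \<alpha> * D \<ge> ustar j)"
    by (auto simp: mult_le_0_iff)
qed

end
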